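(* Let $\mathcal{A}$ be a state tomography algorithm that, given $n$ copies of $\rho\in\mathbb{C}^{d\times d}$ and a parameter $\varepsilon$, outputs an estimate $\widehat{\rho}$ (a quantum state) achieving infidelity $1 - F(\rho,\widehat\rho) \le \varepsilon \le 1/2$. Then letting $\rho' = \Delta_{2\varepsilon}(\widehat{\rho})$, we have $D_{KL}(\rho\|\rho') \le 16\varepsilon\,(2 + \ln(d/(2\varepsilon)))$.
   Context: The fidelity is $F(\rho,\sigma) = \|\sqrt\rho\sqrt\sigma\|_1$ (trace norm), and infidelity is $1-F(\rho,\sigma)$. For $0\le\epsilon\le 1$, the depolarizing channel is $\Delta_\epsilon(\rho) = (1-\epsilon)\rho + \epsilon I/d$. $D_{KL}(\rho\|\sigma) = \mathrm{tr}(\rho(\ln\rho-\ln\sigma))$. *)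

theory Defs
  imports "Jordan_Normal_Form.Schur_Decomposition"
begin

definition mat_trace :: "complex mat \<Rightarrow> complex" where
  "mat_trace A = (\<Sum>i<dim_row A. A $$ (i, i))"

definition unitary_mat :: "nat \<Rightarrow> complex mat \<Rightarrow> bool" where
  "unitary_mat n U \<longleftrightarrow> U \<in> carrier_mat n n \<and>
     U * mat_adjoint U = 1\<^sub>m n \<and> mat_adjoint U * U = 1\<^sub>m n"

definition diag_real :: "nat \<Rightarrow> (nat \<Rightarrow> real) \<Rightarrow> complex mat" where
  "diag_real n lam = mat n n (\<lambda>(i,j). if i = j then complex_of_real (lam i) else 0)"

definition hermitian_mat :: "complex mat \<Rightarrow> bool" where
  "hermitian_mat A \<longleftrightarrow> A \<in> carrier_mat (dim_row A) (dim_row A) \<and> mat_adjoint A = A"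

definition spectral_decomp :: "complex mat \<Rightarrow> complex mat \<Rightarrow> (nat \<Rightarrow> real) \<Rightarrow> bool" where
  "spectral_decomp A U lam \<longleftrightarrow> A \<in> carrier_mat (dim_row A) (dim_row A) \<and>
     unitary_mat (dim_row A) U \<and> A = U * diag_real (dim_row A) lam * mat_adjoint U"

definition mat_fun :: "(real \<Rightarrow> real) \<Rightarrow> complex mat \<Rightarrow> complex mat" where
  "mat_fun f A = (case (SOME (U, lam). spectral_decomp A U lam) of
     (U, lam) \<Rightarrow> U * diag_real (dim_row A) (f \<circ> lam) * mat_adjoint U)"

abbreviation mat_sqrt :: "complex mat \<Rightarrow> complex mat" where
  "mat_sqrt A \<equiv> mat_fun sqrt A"

(* matrix logarithm (applied to eigenvalues; on a zero eigenvalue the value is irrelevant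
   in tr(rho ln rho) since it is multiplied by 0, realising the convention 0 ln 0 = 0) *)
abbreviation mat_ln :: "complex mat \<Rightarrow> complex mat" where
  "mat_ln A \<equiv> mat_fun ln A"

definition psd_mat :: "complex mat \<Rightarrow> bool" where
  "psd_mat A \<longleftrightarrow> hermitian_mat A \<and>
     (\<forall>v \<in> carrier_vec (dim_row A). Im (conjugate v \<bullet> (A *\<^sub>v v)) = 0 \<and> Re (conjugate v \<bullet> (A *\<^sub>v v)) \<ge> 0)"

definition density_mat :: "nat \<Rightarrow> complex mat \<Rightarrow> bool" where
  "density_mat d \<rho> \<longleftrightarrow> \<rho> \<in> carrier_mat d d \<and> psd_mat \<rho> \<and> mat_trace \<rho> = 1"

definition trace_norm :: "complex mat \<Rightarrow> real" where
  "trace_norm A = Re (mat_trace (mat_sqrt (mat_adjoint A * A)))"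

definition fidelity :: "complex mat \<Rightarrow> complex mat \<Rightarrow> real" where
  "fidelity \<rho> \<sigma> = trace_norm (mat_sqrt \<rho> * mat_sqrt \<sigma>)"

definition depolarize :: "nat \<Rightarrow> real \<Rightarrow> complex mat \<Rightarrow> complex mat" where
  "depolarize d \<epsilon> \<rho> = complex_of_real (1 - \<epsilon>) \<cdot>\<^sub>m \<rho> + complex_of_real (\<epsilon> / real d) \<cdot>\<^sub>m 1\<^sub>m d"

definition kl_div :: "complex mat \<Rightarrow> complex mat \<Rightarrow> real" where
  "kl_div \<rho> \<sigma> = Re (mat_trace (\<rho> * (mat_ln \<rho> - mat_ln \<sigma>)))"

end

theory Submission
  imports Defs "Jordan_Normal_Form.Spectral_Radius"
begin

text \<open>
  Diagonalise \<open>\<rho> = U diag(p) U\<^sup>*\<close> and \<open>\<rho>hat = W diag(r) W\<^sup>*\<close>. Both quantities in the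
  theorem are then governed by the doubly stochastic matrix \<open>B\<^sub>i\<^sub>j = |(U\<^sup>* W)\<^sub>i\<^sub>j|\<^sup>2\<close>.
  Writing the trace norm as \<open>Re tr(\<surd>\<rho> \<surd>\<rho>hat Z)\<close> for a partial isometry \<open>Z\<close> (polar
  decomposition) and applying AM-GM entrywise gives \<open>F \<le> \<surd>(\<Sum> B\<^sub>i\<^sub>j \<surd>p\<^sub>i \<surd>r\<^sub>j)\<close>.
  Depolarizing keeps the eigenvectors of \<open>\<rho>hat\<close> and lifts its eigenvalues to
  \<open>q\<^sub>j = (1 - 2\<epsilon>) r\<^sub>j + 2\<epsilon>/d \<ge> \<delta> = 2\<epsilon>/d\<close>, so the relative entropy equals
  \<open>\<Sum> p\<^sub>i ln p\<^sub>i - \<Sum> B\<^sub>i\<^sub>j p\<^sub>i ln q\<^sub>j\<close>. The scalar inequality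
  \<open>p ln (p/q) \<le> 2 (p - \<surd>(pq)) + (3 - 2 ln \<delta>) (\<surd>p - \<surd>q)\<^sup>2\<close> for \<open>q \<ge> \<delta>\<close> bounds it by
  \<open>(8 - 4 ln \<delta>) (1 - \<Sum> B\<^sub>i\<^sub>j \<surd>p\<^sub>i \<surd>q\<^sub>j)\<close>, and the fidelity bound makes the last factor at
  most \<open>4\<epsilon>\<close>.
\<close>

section \<open>Adjoints, diagonal matrices and traces\<close>

declare index_mult_mat(1)[simp del]

lemma dim_mat_adjoint[simp]:
  "dim_row (mat_adjoint A) = dim_col A" "dim_col (mat_adjoint A) = dim_row A"
  unfolding mat_adjoint_def by auto

lemma index_mat_adjoint[simp]:
  "i < dim_col A \<Longrightarrow> j < dim_row A \<Longrightarrow> mat_adjoint A $$ (i,j) = cnj (A $$ (j,i))"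
  unfolding mat_adjoint_def by (simp add: mat_of_rows_index)

lemma mat_adjoint_carrier[simp]: "A \<in> carrier_mat n m \<Longrightarrow> mat_adjoint A \<in> carrier_mat m n"
  by (metis dim_mat_adjoint carrier_matD carrier_matI)

lemma index_mult_mat_sum:
  "A \<in> carrier_mat n m \<Longrightarrow> B \<in> carrier_mat m p \<Longrightarrow> i < n \<Longrightarrow> j < p \<Longrightarrow>
   (A * B) $$ (i,j) = (\<Sum>l<m. A $$ (i,l) * B $$ (l,j))"
  by (auto simp: index_mult_mat scalar_prod_def lessThan_atLeast0 intro!: sum.cong)

lemma mat_adjoint_mult:
  assumes A: "(A::complex mat) \<in> carrier_mat n m" and B: "B \<in> carrier_mat m p"
  shows "mat_adjoint (A * B) = mat_adjoint B * mat_adjoint A"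
proof (rule eq_matI)
  fix i j assume "i < dim_row (mat_adjoint B * mat_adjoint A)" "j < dim_col (mat_adjoint B * mat_adjoint A)"
  with A B show "mat_adjoint (A * B) $$ (i, j) = (mat_adjoint B * mat_adjoint A) $$ (i, j)"
    by (simp add: index_mult_mat_sum[OF mat_adjoint_carrier[OF B] mat_adjoint_carrier[OF A]]
        index_mult_mat_sum[OF A B] mult.commute)
qed (use A B in auto)

lemma mat_adjoint_mat_adjoint[simp]: "mat_adjoint (mat_adjoint (A::complex mat)) = A"
  by (rule eq_matI) auto

lemma mat_adjoint_one[simp]: "mat_adjoint (1\<^sub>m n :: complex mat) = 1\<^sub>m n"
  by (rule eq_matI) auto

lemma diag_real_carrier[simp]: "diag_real n a \<in> carrier_mat n n"
  by (simp add: diag_real_def)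

lemma dim_diag_real[simp]: "dim_row (diag_real n a) = n" "dim_col (diag_real n a) = n"
  by (simp_all add: diag_real_def)

lemma index_diag_real[simp]:
  "i < n \<Longrightarrow> j < n \<Longrightarrow> diag_real n a $$ (i,j) = (if i = j then complex_of_real (a i) else 0)"
  by (simp add: diag_real_def)

lemma index_diag_real_mult:
  assumes X: "X \<in> carrier_mat n m" and ij: "i < n" "j < m"
  shows "(diag_real n a * X) $$ (i,j) = complex_of_real (a i) * X $$ (i,j)"
proof -
  have "(diag_real n a * X) $$ (i,j) = (\<Sum>l<n. if l = i then complex_of_real (a i) * X $$ (i,j) else 0)"
    unfolding index_mult_mat_sum[OF diag_real_carrier X ij] by (rule sum.cong) (use ij in auto)
  with ij show ?thesis by simp
qed

lemma index_mult_diag_real: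
  assumes X: "X \<in> carrier_mat m n" and ij: "i < m" "j < n"
  shows "(X * diag_real n a) $$ (i,j) = X $$ (i,j) * complex_of_real (a j)"
proof -
  have "(X * diag_real n a) $$ (i,j) = (\<Sum>l<n. if l = j then X $$ (i,j) * complex_of_real (a j) else 0)"
    unfolding index_mult_mat_sum[OF X diag_real_carrier ij] by (rule sum.cong) (use ij in auto)
  with ij show ?thesis by simp
qed

lemma diag_real_mult_diag_real: "diag_real n a * diag_real n b = diag_real n (\<lambda>k. a k * b k)"
  by (rule eq_matI) (auto simp: index_diag_real_mult[of _ n n])

lemma mat_adjoint_diag_real[simp]: "mat_adjoint (diag_real n a) = diag_real n a"
  by (rule eq_matI) auto

lemma mat_trace_mult_comm:
  "A \<in> carrier_mat n m \<Longrightarrow> B \<in> carrier_mat m n \<Longrightarrow> mat_trace (A * B) = mat_trace (B * A)"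
  by (simp add: mat_trace_def index_mult_mat_sum[of A n m B n] index_mult_mat_sum[of B m n A m]
      sum.swap[of _ "{..<n}"] mult.commute)

lemma mat_trace_diff:
  "A \<in> carrier_mat n n \<Longrightarrow> B \<in> carrier_mat n n \<Longrightarrow> mat_trace (A - B) = mat_trace A - mat_trace B"
  by (simp add: mat_trace_def sum_subtractf)

lemma mat_trace_diag_real: "mat_trace (diag_real n a) = complex_of_real (\<Sum>i<n. a i)"
  by (simp add: mat_trace_def)

lemma mat_trace_diag_real_sandwich:
  assumes M: "M \<in> carrier_mat n n" and N: "N \<in> carrier_mat n n"
  shows "mat_trace (diag_real n a * M * diag_real n b * N) =
    (\<Sum>i<n. \<Sum>j<n. complex_of_real (a i * b j) * M $$ (i,j) * N $$ (j,i))"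
proof -
  have DM: "diag_real n a * M \<in> carrier_mat n n" and DMD: "diag_real n a * M * diag_real n b \<in> carrier_mat n n"
    using M by auto
  have "mat_trace (diag_real n a * M * diag_real n b * N) =
      (\<Sum>i<n. \<Sum>j<n. (diag_real n a * M * diag_real n b) $$ (i,j) * N $$ (j,i))"
    using N by (simp add: mat_trace_def index_mult_mat_sum[OF DMD N])
  also have "\<dots> = (\<Sum>i<n. \<Sum>j<n. complex_of_real (a i * b j) * M $$ (i,j) * N $$ (j,i))"
    by (intro sum.cong refl) (simp add: index_mult_diag_real[OF DM] index_diag_real_mult[OF M])
  finally show ?thesis .
qed

lemma index_mult_mat_adjoint_diag:
  assumes K: "K \<in> carrier_mat n m" and i: "i < n"
  shows "(K * mat_adjoint K) $$ (i,i) = complex_of_real (\<Sum>j<m. (cmod (K $$ (i,j)))\<^sup>2)"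
  unfolding index_mult_mat_sum[OF K mat_adjoint_carrier[OF K] i i] of_real_sum
  by (rule sum.cong) (use K i in \<open>auto simp del: of_real_power simp add: complex_norm_square\<close>)

lemma index_conj_diag_real:
  assumes N: "N \<in> carrier_mat n n" and ij: "i < n" "j < n"
  shows "(N * diag_real n a * mat_adjoint N) $$ (i,j) =
    (\<Sum>k<n. N $$ (i,k) * complex_of_real (a k) * cnj (N $$ (j,k)))"
proof -
  have ND: "N * diag_real n a \<in> carrier_mat n n" using N by auto
  show ?thesis
    unfolding index_mult_mat_sum[OF ND mat_adjoint_carrier[OF N] ij]
    by (rule sum.cong) (use N ij in \<open>auto simp: index_mult_diag_real[OF N]\<close>)
qed

section \<open>Unitary matrices\<close>

lemma unitary_matD:
  assumes "unitary_mat n U"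
  shows "U \<in> carrier_mat n n" "U * mat_adjoint U = 1\<^sub>m n" "mat_adjoint U * U = 1\<^sub>m n"
  using assms unfolding unitary_mat_def by auto

lemma unitary_mat_one: "unitary_mat n (1\<^sub>m n)"
  by (simp add: unitary_mat_def)

lemma unitary_mat_adjoint: "unitary_mat n U \<Longrightarrow> unitary_mat n (mat_adjoint U)"
  unfolding unitary_mat_def by auto

lemma unitary_mat_cancel:
  assumes U: "unitary_mat n U" and X: "X \<in> carrier_mat n n"
  shows "mat_adjoint U * (U * X) = X" "U * (mat_adjoint U * X) = X"
  using unitary_matD[OF U] X by (simp_all flip: assoc_mult_mat[of _ n n _ n _ n])

lemma unitary_mat_mult:
  assumes U: "unitary_mat n U" and V: "unitary_mat n V"
  shows "unitary_mat n (U * V)"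
proof -
  note u = unitary_matD[OF U] and v = unitary_matD[OF V]
  have "U * V * (mat_adjoint V * mat_adjoint U) = 1\<^sub>m n"
    using u v unitary_mat_cancel(2)[OF V] by (simp add: assoc_mult_mat[of _ n n _ n _ n] mult_carrier_mat[of _ n n _ n])
  moreover have "mat_adjoint V * mat_adjoint U * (U * V) = 1\<^sub>m n"
    using u v unitary_mat_cancel(1)[OF U] by (simp add: assoc_mult_mat[of _ n n _ n _ n] mult_carrier_mat[of _ n n _ n])
  ultimately show ?thesis
    using u v by (simp add: unitary_mat_def mat_adjoint_mult[of _ n n])
qed

lemma unitary_mat_row_norm:
  assumes U: "unitary_mat n U" and i: "i < n"
  shows "(\<Sum>j<n. (cmod (U $$ (i,j)))\<^sup>2) = 1"
  using index_mult_mat_adjoint_diag[OF unitary_matD(1)[OF U] i] unitary_matD(2)[OF U] i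
  by (metis index_one_mat(1) of_real_eq_1_iff)

lemma unitary_mat_col_norm:
  assumes U: "unitary_mat n U" and j: "j < n"
  shows "(\<Sum>i<n. (cmod (U $$ (i,j)))\<^sup>2) = 1"
  using unitary_mat_row_norm[OF unitary_mat_adjoint[OF U] j] unitary_matD(1)[OF U] j
  by simp

lemma unitary_mat_diagonalizes:
  assumes U: "unitary_mat n U"
  shows "mat_adjoint U * (U * diag_real n a * mat_adjoint U) * U = diag_real n a"
  using unitary_matD[OF U]
  by (simp add: assoc_mult_mat[of _ n n _ n _ n] mult_carrier_mat[of _ n n _ n] unitary_mat_cancel[OF U])

section \<open>Spectral theorem for Hermitian matrices\<close>

definition householder_mat :: "nat \<Rightarrow> (nat \<Rightarrow> complex) \<Rightarrow> complex mat" where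
  "householder_mat n u = mat n n (\<lambda>(i,j). (if i = j then 1 else 0)
     - complex_of_real (2 / (\<Sum>l<n. (cmod (u l))\<^sup>2)) * u i * cnj (u j))"

lemma householder_mat_carrier[simp]: "householder_mat n u \<in> carrier_mat n n"
  by (simp add: householder_mat_def)

lemma index_householder_mat:
  "i < n \<Longrightarrow> j < n \<Longrightarrow> householder_mat n u $$ (i,j) =
     (if i = j then 1 else 0) - complex_of_real (2 / (\<Sum>l<n. (cmod (u l))\<^sup>2)) * u i * cnj (u j)"
  by (simp add: householder_mat_def)

lemma mat_adjoint_householder_mat: "mat_adjoint (householder_mat n u) = householder_mat n u"
  by (rule eq_matI) (auto simp: householder_mat_def mult.commute mult.left_commute)

lemma householder_mat_unitary: "unitary_mat n (householder_mat n u)"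
proof -
  define s where "s = (\<Sum>l<n. (cmod (u l))\<^sup>2)"
  define C where "C = complex_of_real (2 / s)"
  let ?H = "householder_mat n u"
  have H: "?H $$ (i,j) = (if i = j then 1 else 0) - C * u i * cnj (u j)" if "i < n" "j < n" for i j
    using that by (simp add: index_householder_mat C_def s_def)
  have norm_u: "(\<Sum>l<n. cnj (u l) * u l) = complex_of_real s"
    unfolding s_def of_real_sum by (rule sum.cong) (simp_all only: complex_norm_square mult.commute)
  \<comment> \<open>this also covers \<open>u = 0\<close>, where \<open>2 / 0 = 0\<close> makes \<open>?H\<close> the identity\<close>
  have C: "C * C * complex_of_real s - 2 * C = 0"
    by (cases "s = 0") (auto simp: C_def field_simps simp flip: of_real_mult)
  have "?H * ?H = 1\<^sub>m n"
  proof (rule eq_matI)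
    fix i j assume "i < dim_row (1\<^sub>m n :: complex mat)" "j < dim_col (1\<^sub>m n :: complex mat)"
    then have ij: "i < n" "j < n" by auto
    have "(?H * ?H) $$ (i,j) = (\<Sum>l<n. ((if i = l then 1 else 0) - C * u i * cnj (u l)) *
        ((if l = j then 1 else 0) - C * u l * cnj (u j)))"
      unfolding index_mult_mat_sum[OF householder_mat_carrier householder_mat_carrier ij]
      by (rule sum.cong) (simp_all add: H ij)
    also have "\<dots> = (\<Sum>l<n. (if i = l then 1 else 0) * (if l = j then 1 else 0))
        - C * u i * (\<Sum>l<n. cnj (u l) * (if l = j then 1 else 0))
        - C * cnj (u j) * (\<Sum>l<n. (if i = l then 1 else 0) * u l)
        + C * C * u i * cnj (u j) * (\<Sum>l<n. cnj (u l) * u l)"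
      by (simp add: algebra_simps sum.distrib sum_subtractf sum_distrib_left)
    also have "\<dots> = (if i = j then 1 else 0) - 2 * C * u i * cnj (u j)
        + C * C * u i * cnj (u j) * (\<Sum>l<n. cnj (u l) * u l)"
      using ij by (simp add: if_distrib[of "\<lambda>x. x * _"] if_distrib[of "\<lambda>x. _ * x"] cong: if_cong)
    also have "\<dots> = (if i = j then 1 else 0) + u i * cnj (u j) * (C * C * complex_of_real s - 2 * C)"
      unfolding norm_u by (simp add: algebra_simps)
    finally show "(?H * ?H) $$ (i,j) = 1\<^sub>m n $$ (i,j)"
      using ij by (simp add: C)
  qed (simp_all add: householder_mat_def)
  then show ?thesis
    by (simp add: unitary_mat_def mat_adjoint_householder_mat)
qed

lemma index_householder_mat_orthogonal:
  "u j = 0 \<Longrightarrow> i < n \<Longrightarrow> j < n \<Longrightarrow> householder_mat n u $$ (i,j) = (if i = j then 1 else 0)"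
  by (simp add: index_householder_mat)

lemma householder_mat_maps_unit_vector:
  assumes k: "k < n" and i: "i < n" and w: "(\<Sum>l<n. (cmod (w l))\<^sup>2) = 1" and w_k: "Im (w k) = 0"
  shows "householder_mat n (\<lambda>l. (if l = k then 1 else 0) - w l) $$ (i,k) = w i"
proof -
  define u where "u l = (if l = k then 1 else 0) - w l" for l
  define s where "s = (\<Sum>l<n. (cmod (u l))\<^sup>2)"
  have u_k: "u k = complex_of_real (1 - Re (w k))" and w_k': "w k = complex_of_real (Re (w k))"
    using w_k by (simp_all add: u_def complex_eq_iff)
  have "(cmod (u l))\<^sup>2 = (cmod (w l))\<^sup>2 + (if l = k then 1 - 2 * Re (w k) else 0)" for l
  proof (cases "l = k")
    case True
    have "(cmod (u k))\<^sup>2 = (1 - Re (w k))\<^sup>2" "(cmod (w k))\<^sup>2 = (Re (w k))\<^sup>2"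
      by (subst u_k w_k', simp only: norm_of_real power2_abs)+
    with True show ?thesis by (simp add: power2_eq_square algebra_simps)
  qed (simp add: u_def norm_minus_commute)
  then have s: "s = 2 - 2 * Re (w k)"
    using w k by (simp add: s_def sum.distrib)
  show ?thesis
  proof (cases "s = 0")
    case True
    then have "u l = 0" if "l < n" for l
      using that sum_nonneg_eq_0_iff[of "{..<n}" "\<lambda>l. (cmod (u l))\<^sup>2"] by (simp add: s_def)
    with i k show ?thesis
      by (simp add: index_householder_mat u_def[symmetric]) (metis u_def diff_eq_eq add_0)
  next
    case False
    have "complex_of_real (2 / s) * cnj (u k) = complex_of_real (2 / s * (1 - Re (w k)))"
      by (simp only: u_k complex_cnj_complex_of_real of_real_mult)
    also have "2 / s * (1 - Re (w k)) = 1"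
      using False s by (simp add: field_simps)
    finally have "complex_of_real (2 / s) * cnj (u k) = 1" by simp
    moreover have "householder_mat n u $$ (i,k) =
        (if i = k then 1 else 0) - u i * (complex_of_real (2 / s) * cnj (u k))"
      using i k by (simp add: index_householder_mat s_def[symmetric] mult_ac)
    ultimately have "householder_mat n u $$ (i,k) = w i" by (simp add: u_def)
    then show ?thesis by (simp add: u_def[abs_def])
  qed
qed

lemma self_adjoint_congruence:
  assumes A: "(A::complex mat) \<in> carrier_mat n n" and h: "mat_adjoint A = A" and U: "U \<in> carrier_mat n n"
  shows "mat_adjoint (mat_adjoint U * A * U) = mat_adjoint U * A * U"
  using A U h by (simp add: mat_adjoint_mult[of _ n n _ n] assoc_mult_mat[of _ n n _ n _ n])

lemma eigenvector_vanishing_below: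
  assumes B: "(B::complex mat) \<in> carrier_mat n n" and k: "k < n"
    and rows: "\<forall>i<k. \<forall>j<n. i \<noteq> j \<longrightarrow> B $$ (i,j) = 0"
  shows "\<exists>w \<mu>. (\<forall>i<k. w i = 0) \<and> (\<exists>i<n. w i \<noteq> 0) \<and> (\<forall>i<n. (\<Sum>j<n. B $$ (i,j) * w j) = \<mu> * w i)"
proof -
  define C where "C = mat (n-k) (n-k) (\<lambda>(i,j). B $$ (i+k, j+k))"
  have C: "C \<in> carrier_mat (n-k) (n-k)" by (simp add: C_def)
  from spectrum_non_empty[OF C] k obtain \<mu> where "\<mu> \<in> spectrum C" by fastforce
  then obtain v where "eigenvector C v \<mu>" unfolding spectrum_def eigenvalue_def by auto
  then have v: "v \<in> carrier_vec (n-k)" "v \<noteq> 0\<^sub>v (n-k)" "C *\<^sub>v v = \<mu> \<cdot>\<^sub>v v"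
    unfolding eigenvector_def using C by auto
  \<comment> \<open>as the first \<open>k\<close> rows of \<open>B\<close> vanish off the diagonal, padding an eigenvector of the
    trailing block with zeros gives one of \<open>B\<close>\<close>
  define w where "w i = (if i < k then 0 else v $ (i - k))" for i
  obtain l where l: "l < n-k" "v $ l \<noteq> 0"
    using v(1,2) by (metis eq_vecI carrier_vecD index_zero_vec)
  have sum_w: "(\<Sum>j<n. f j * w j) = (\<Sum>l<n-k. f (l+k) * v $ l)" for f
  proof -
    have "(\<Sum>j<n. f j * w j) = (\<Sum>j\<in>{k..<n}. f j * w j)"
      by (rule sum.mono_neutral_right) (auto simp: w_def)
    also have "\<dots> = (\<Sum>l<n-k. f (l+k) * w (l+k))"
      by (rule sum.reindex_bij_witness[of _ "\<lambda>l. l+k" "\<lambda>j. j - k"]) auto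
    finally show ?thesis by (simp add: w_def)
  qed
  have "(\<Sum>j<n. B $$ (i,j) * w j) = \<mu> * w i" if i: "i < n" for i
  proof (cases "i < k")
    case True
    have "(\<Sum>j<n. B $$ (i,j) * w j) = (\<Sum>l<n-k. B $$ (i,l+k) * v $ l)" by (rule sum_w)
    also have "\<dots> = 0" using True rows by (intro sum.neutral) auto
    finally show ?thesis using True by (simp add: w_def)
  next
    case False
    have "(\<Sum>j<n. B $$ (i,j) * w j) = (\<Sum>l<n-k. C $$ (i-k, l) * v $ l)"
      unfolding sum_w using False i by (intro sum.cong) (auto simp: C_def)
    also have "\<dots> = (C *\<^sub>v v) $ (i-k)"
      using False i C v(1) by (simp add: scalar_prod_def lessThan_atLeast0)
    finally show ?thesis using v(1,3) False i by (simp add: w_def)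
  qed
  moreover have "w (l+k) \<noteq> 0" "l + k < n" using l by (auto simp: w_def)
  ultimately show ?thesis by (metis w_def)
qed

lemma unit_multiple_real_at:
  fixes w :: "nat \<Rightarrow> complex"
  assumes "i0 < n" "w i0 \<noteq> 0"
  shows "\<exists>c. (\<Sum>i<n. (cmod (c * w i))\<^sup>2) = 1 \<and> Im (c * w k) = 0"
proof -
  define N where "N = sqrt (\<Sum>i<n. (cmod (w i))\<^sup>2)"
  have "(cmod (w i0))\<^sup>2 \<le> (\<Sum>i<n. (cmod (w i))\<^sup>2)"
    using assms(1) by (intro member_le_sum) auto
  then have N: "N > 0" using assms(2) unfolding N_def
    by (metis norm_eq_zero order.strict_trans2 real_sqrt_gt_0_iff zero_less_power2)
  \<comment> \<open>the phase factor \<open>cnj (w k) / cmod (w k)\<close> makes the \<open>k\<close>-th entry real\<close>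
  define c where "c = (if w k = 0 then 1 else cnj (w k) / cmod (w k)) / complex_of_real N"
  have "cmod (c * w i) = cmod (w i) / N" for i
    using N by (simp add: c_def norm_mult norm_divide)
  then have "(\<Sum>i<n. (cmod (c * w i))\<^sup>2) = (\<Sum>i<n. (cmod (w i))\<^sup>2) / N\<^sup>2"
    by (simp add: power_divide sum_divide_distrib)
  also have "\<dots> = 1"
    using N by (simp add: N_def sum_nonneg)
  finally have "(\<Sum>i<n. (cmod (c * w i))\<^sup>2) = 1" .
  moreover have "Im (c * w k) = 0"
  proof (cases "w k = 0")
    case False
    then have "c * w k = complex_of_real ((cmod (w k))\<^sup>2 / cmod (w k) / N)"
      by (simp add: c_def mult.commute[of "cnj _"] flip: complex_norm_square)
    then show ?thesis by simp
  qed (simp add: c_def)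
  ultimately show ?thesis by blast
qed

lemma unit_eigenvector_vanishing_below:
  assumes B: "(B::complex mat) \<in> carrier_mat n n" and k: "k < n"
    and rows: "\<forall>i<k. \<forall>j<n. i \<noteq> j \<longrightarrow> B $$ (i,j) = 0"
  shows "\<exists>w \<mu>. (\<forall>i<k. w i = 0) \<and> (\<Sum>i<n. (cmod (w i))\<^sup>2) = 1 \<and> Im (w k) = 0 \<and>
    (\<forall>i<n. (\<Sum>j<n. B $$ (i,j) * w j) = \<mu> * w i)"
proof -
  obtain w \<mu> i0 where w: "\<forall>i<k. w i = 0" "i0 < n" "w i0 \<noteq> 0"
    and eigen: "\<forall>i<n. (\<Sum>j<n. B $$ (i,j) * w j) = \<mu> * w i"
    using eigenvector_vanishing_below[OF B k rows] by blast
  obtain c where c: "(\<Sum>i<n. (cmod (c * w i))\<^sup>2) = 1" "Im (c * w k) = 0"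
    using unit_multiple_real_at[of i0 n w k] w(2,3) by blast
  have "(\<Sum>j<n. B $$ (i,j) * (c * w j)) = \<mu> * (c * w i)" if "i < n" for i
  proof -
    have "(\<Sum>j<n. B $$ (i,j) * (c * w j)) = c * (\<Sum>j<n. B $$ (i,j) * w j)"
      by (simp add: sum_distrib_left mult_ac)
    with eigen that show ?thesis by (simp add: mult_ac)
  qed
  with w(1) c show ?thesis
    by (intro exI[of _ "\<lambda>i. c * w i"] exI[of _ \<mu>]) auto
qed

lemma index_mult_unit_column:
  assumes X: "X \<in> carrier_mat n n" and Y: "Y \<in> carrier_mat n n" and ij: "i < n" "j < n"
    and col: "\<forall>m<n. Y $$ (m,j) = (if m = j then c else 0)"
  shows "(X * Y) $$ (i,j) = X $$ (i,j) * c"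
  using ij col by (simp add: index_mult_mat_sum[OF X Y ij] if_distrib[of "\<lambda>x. _ * x"] cong: if_cong)

lemma involution_conj_diag_columns:
  assumes B: "B \<in> carrier_mat n n" and V: "V \<in> carrier_mat n n" "V * V = 1\<^sub>m n" and k: "k < n"
    and V_fix: "\<And>j. j < k \<Longrightarrow> \<forall>m<n. V $$ (m,j) = (if m = j then 1 else 0)"
    and B_diag: "\<forall>i<n. \<forall>j<k. B $$ (i,j) = (if i = j then complex_of_real (lam j) else 0)"
    and eigen: "\<And>l. l < n \<Longrightarrow> (B * V) $$ (l,k) = \<mu> * V $$ (l,k)"
    and ij: "i < n" "j < Suc k"
  shows "(V * (B * V)) $$ (i,j) = (if i = j then (if j = k then \<mu> else complex_of_real (lam j)) else 0)"
proof (cases "j < k")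
  case True
  have BV: "\<forall>l<n. (B * V) $$ (l,j) = (if l = j then complex_of_real (lam j) else 0)"
    using True k B_diag index_mult_unit_column[OF B V(1) _ _ V_fix[OF True]] by simp
  show ?thesis
    using True ij k index_mult_unit_column[OF V(1) mult_carrier_mat[OF B V(1)] _ _ BV] V_fix[OF True] by auto
next
  case False
  then have "j = k" using ij by simp
  have "(V * (B * V)) $$ (i,k) = \<mu> * (V * V) $$ (i,k)"
    using ij k B V(1) by (simp add: index_mult_mat_sum[of V n n "B * V" n] index_mult_mat_sum[OF V(1) V(1)]
        eigen sum_distrib_left mult.left_commute[of \<mu>])
  with \<open>j = k\<close> ij k V(2) show ?thesis by simp
qed

lemma hermitian_diagonalize_next_column:
  assumes A: "(A::complex mat) \<in> carrier_mat n n" and h: "mat_adjoint A = A" and k: "k < n"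
    and U: "unitary_mat n U"
    and diag: "\<forall>i<n. \<forall>j<k. (mat_adjoint U * A * U) $$ (i,j) = (if i = j then complex_of_real (lam j) else 0)"
  shows "\<exists>U' lam'. unitary_mat n U' \<and>
    (\<forall>i<n. \<forall>j<Suc k. (mat_adjoint U' * A * U') $$ (i,j) = (if i = j then complex_of_real (lam' j) else 0))"
proof -
  note u = unitary_matD[OF U]
  define B where "B = mat_adjoint U * A * U"
  have B: "B \<in> carrier_mat n n" using A u(1) by (auto simp: B_def)
  have hB: "mat_adjoint B = B" unfolding B_def by (rule self_adjoint_congruence[OF A h u(1)])
  have "B $$ (i,j) = 0" if "i < k" "j < n" "i \<noteq> j" for i j
  proof -
    have "B $$ (i,j) = cnj (B $$ (j,i))"
      using that k B arg_cong[OF hB, of "\<lambda>M. M $$ (i,j)"] by simp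
    with that diag k show ?thesis by (simp add: B_def)
  qed
  then obtain w \<mu> where w: "\<forall>i<k. w i = 0" "(\<Sum>i<n. (cmod (w i))\<^sup>2) = 1" "Im (w k) = 0"
    and eigen: "\<forall>i<n. (\<Sum>j<n. B $$ (i,j) * w j) = \<mu> * w i"
    using unit_eigenvector_vanishing_below[OF B k] by blast
  \<comment> \<open>a reflection fixing \<open>e\<^sub>0, \<dots>, e\<^sub>k\<^sub>-\<^sub>1\<close> and mapping \<open>e\<^sub>k\<close> to the eigenvector \<open>w\<close>\<close>
  define V where "V = householder_mat n (\<lambda>l. (if l = k then 1 else 0) - w l)"
  have V: "unitary_mat n V" "mat_adjoint V = V" "V \<in> carrier_mat n n"
    by (simp_all add: V_def householder_mat_unitary mat_adjoint_householder_mat)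
  have V_k: "V $$ (l,k) = w l" if "l < n" for l
    using householder_mat_maps_unit_vector[OF k that w(2,3)] by (simp add: V_def)
  have entries: "(V * (B * V)) $$ (i,j) = (if i = j then (if j = k then \<mu> else complex_of_real (lam j)) else 0)"
    if "i < n" "j < Suc k" for i j
  proof (rule involution_conj_diag_columns[OF B V(3) _ k _ _ _ that])
    show "V * V = 1\<^sub>m n" using unitary_matD(2)[OF V(1)] V(2) by simp
    show "\<forall>m<n. V $$ (m,j) = (if m = j then 1 else 0)" if "j < k" for j
      using that k w(1) by (simp add: V_def index_householder_mat_orthogonal)
    show "\<forall>i<n. \<forall>j<k. B $$ (i,j) = (if i = j then complex_of_real (lam j) else 0)"
      using diag by (simp add: B_def)
    show "(B * V) $$ (l,k) = \<mu> * V $$ (l,k)" if "l < n" for l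
      using that k eigen by (simp add: index_mult_mat_sum[OF B V(3)] V_k)
  qed
  define U' where "U' = U * V"
  have U'_conj: "mat_adjoint U' * A * U' = V * (B * V)"
    unfolding U'_def B_def using A u(1) V
    by (simp add: mat_adjoint_mult[of _ n n _ n] assoc_mult_mat[of _ n n _ n _ n] mult_carrier_mat[of _ n n _ n])
  have VBV: "V * (B * V) \<in> carrier_mat n n" using V(3) B by simp
  have "mat_adjoint (V * (B * V)) = V * (B * V)"
    using self_adjoint_congruence[OF A h mult_carrier_mat[OF u(1) V(3)]] U'_conj by (simp add: U'_def)
  then have "\<mu> = mat_adjoint (V * (B * V)) $$ (k,k)" using entries[of k k] k by simp
  also have "\<dots> = cnj \<mu>" using entries[of k k] k carrier_matD[OF VBV] by simp
  finally have "\<mu> = complex_of_real (Re \<mu>)" by (simp add: complex_eq_iff)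
  then have "\<forall>i<n. \<forall>j<Suc k. (mat_adjoint U' * A * U') $$ (i,j) =
      (if i = j then complex_of_real ((lam(k := Re \<mu>)) j) else 0)"
    using entries by (simp add: U'_conj)
  moreover have "unitary_mat n U'" unfolding U'_def by (rule unitary_mat_mult[OF U V(1)])
  ultimately show ?thesis by blast
qed

lemma hermitian_partial_diagonalization:
  assumes A: "(A::complex mat) \<in> carrier_mat n n" and h: "mat_adjoint A = A"
  shows "k \<le> n \<Longrightarrow> \<exists>U lam. unitary_mat n U \<and>
    (\<forall>i<n. \<forall>j<k. (mat_adjoint U * A * U) $$ (i,j) = (if i = j then complex_of_real (lam j) else 0))"
proof (induction k)
  case 0
  show ?case using unitary_mat_one by blast
next
  case (Suc k)
  then show ?case using hermitian_diagonalize_next_column[OF A h] by (metis Suc_le_lessD less_imp_le)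
qed

lemma hermitian_spectral_decomp:
  assumes "hermitian_mat A"
  shows "\<exists>U lam. spectral_decomp A U lam"
proof -
  define n where "n = dim_row A"
  have A: "A \<in> carrier_mat n n" and h: "mat_adjoint A = A"
    using assms by (auto simp: hermitian_mat_def n_def)
  obtain U lam where U: "unitary_mat n U"
    and diag: "\<forall>i<n. \<forall>j<n. (mat_adjoint U * A * U) $$ (i,j) = (if i = j then complex_of_real (lam j) else 0)"
    using hermitian_partial_diagonalization[OF A h order.refl] by blast
  have "A = U * (mat_adjoint U * A * U) * mat_adjoint U"
    using A unitary_matD[OF U]
    by (simp add: assoc_mult_mat[of _ n n _ n _ n] mult_carrier_mat[of _ n n _ n] unitary_mat_cancel[OF U])
  also have "mat_adjoint U * A * U = diag_real n lam"
    by (rule eq_matI) (use diag A unitary_matD(1)[OF U] in auto)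
  finally have "A = U * diag_real n lam * mat_adjoint U" .
  with A U show ?thesis unfolding spectral_decomp_def n_def[symmetric] by blast
qed

section \<open>Functional calculus and density matrices\<close>

lemma spectral_decompD:
  assumes "spectral_decomp A U lam" and "dim_row A = n"
  shows "A \<in> carrier_mat n n" "unitary_mat n U" "A = U * diag_real n lam * mat_adjoint U"
  using assms(1) unfolding spectral_decomp_def assms(2) by blast+

lemma unitary_diag_real_fun_eq:
  assumes U: "unitary_mat n U" and V: "unitary_mat n V"
    and eq: "U * diag_real n a * mat_adjoint U = V * diag_real n b * mat_adjoint V"
  shows "U * diag_real n (f \<circ> a) * mat_adjoint U = V * diag_real n (f \<circ> b) * mat_adjoint V"
proof -
  note u = unitary_matD[OF U] and v = unitary_matD[OF V]
  note simps = assoc_mult_mat[of _ n n _ n _ n] mult_carrier_mat[of _ n n _ n]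
  define M where "M = mat_adjoint U * V"
  have M: "M \<in> carrier_mat n n" using u v by (simp add: M_def mult_carrier_mat[of _ n n _ n])
  have "diag_real n a * M = mat_adjoint U * (U * diag_real n a * mat_adjoint U) * V"
    using u v by (simp add: M_def simps unitary_mat_cancel[OF U])
  also have "\<dots> = M * diag_real n b"
    using u v by (simp add: eq M_def simps unitary_mat_cancel[OF V])
  finally have DM: "diag_real n a * M = M * diag_real n b" .
  \<comment> \<open>\<open>M\<close> only links equal eigenvalues, so it also intertwines \<open>f \<circ> a\<close> and \<open>f \<circ> b\<close>\<close>
  have link: "M $$ (i,j) = 0 \<or> a i = b j" if "i < n" "j < n" for i j
    using arg_cong[OF DM, of "\<lambda>X. X $$ (i,j)"] that
    by (simp add: index_diag_real_mult[OF M] index_mult_diag_real[OF M])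
  have "complex_of_real (f (a i)) * M $$ (i,j) = M $$ (i,j) * complex_of_real (f (b j))"
    if "i < n" "j < n" for i j
    using link[OF that] by (auto simp: mult.commute)
  then have fM: "diag_real n (f \<circ> a) * M = M * diag_real n (f \<circ> b)"
    using M by (intro eq_matI) (simp_all add: index_diag_real_mult[OF M] index_mult_diag_real[OF M])
  have "U * diag_real n (f \<circ> a) * mat_adjoint U = U * (diag_real n (f \<circ> a) * M) * mat_adjoint V"
    using u v by (simp add: M_def simps unitary_mat_cancel[OF V])
  also have "\<dots> = U * (M * diag_real n (f \<circ> b)) * mat_adjoint V"
    by (simp only: fM)
  also have "\<dots> = (U * M) * diag_real n (f \<circ> b) * mat_adjoint V"
    using u v M by (simp add: simps)
  also have "U * M = V"
    using u v by (simp add: M_def unitary_mat_cancel[OF U])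
  finally show ?thesis .
qed

lemma mat_fun_spectral_decomp:
  assumes "spectral_decomp A U lam"
  shows "mat_fun f A = U * diag_real (dim_row A) (f \<circ> lam) * mat_adjoint U"
proof -
  obtain U' lam' where some: "(SOME (U, lam). spectral_decomp A U lam) = (U', lam')"
    by (cases "SOME (U, lam). spectral_decomp A U lam") auto
  have "spectral_decomp A U' lam'"
    using someI_ex[of "\<lambda>(U, lam). spectral_decomp A U lam"] assms some by auto
  then have "unitary_mat (dim_row A) U'"
    and "U' * diag_real (dim_row A) lam' * mat_adjoint U' = U * diag_real (dim_row A) lam * mat_adjoint U"
    using assms unfolding spectral_decomp_def by auto
  with assms have "U' * diag_real (dim_row A) (f \<circ> lam') * mat_adjoint U' =
      U * diag_real (dim_row A) (f \<circ> lam) * mat_adjoint U"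
    unfolding spectral_decomp_def by (blast intro: unitary_diag_real_fun_eq)
  then show ?thesis by (simp add: mat_fun_def some)
qed

lemma mat_trace_unitary_conj_diag_real:
  assumes U: "unitary_mat n U"
  shows "mat_trace (U * diag_real n lam * mat_adjoint U) = complex_of_real (\<Sum>i<n. lam i)"
proof -
  note u = unitary_matD[OF U]
  have "mat_trace (U * (diag_real n lam * mat_adjoint U)) = mat_trace (diag_real n lam * mat_adjoint U * U)"
    using u by (intro mat_trace_mult_comm) auto
  then show ?thesis
    using u by (simp add: assoc_mult_mat[of _ n n _ n _ n] mat_trace_diag_real)
qed

lemma psd_spectral_decomp_nonneg:
  assumes P: "psd_mat A" and sd: "spectral_decomp A U lam" and i: "i < dim_row A"
  shows "lam i \<ge> 0"
proof -
  define n where "n = dim_row A"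
  note A = spectral_decompD(1)[OF sd n_def[symmetric]]
    and U = spectral_decompD(2)[OF sd n_def[symmetric]]
    and dec = spectral_decompD(3)[OF sd n_def[symmetric]]
  have i: "i < n" using i by (simp add: n_def)
  note u = unitary_matD[OF U]
  define v where "v = col U i"
  have v: "v \<in> carrier_vec n" using u(1) by (simp add: v_def carrier_vecI)
  have AU: "A * U \<in> carrier_mat n n" using A u(1) by simp
  have "complex_of_real (lam i) = (mat_adjoint U * A * U) $$ (i,i)"
    using unitary_mat_diagonalizes[OF U] dec i by simp
  also have "\<dots> = (\<Sum>l<n. cnj (U $$ (l,i)) * (A * U) $$ (l,i))"
    using A u(1) i by (simp add: assoc_mult_mat[of _ n n _ n _ n] index_mult_mat_sum[OF mat_adjoint_carrier[OF u(1)] AU])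
  also have "\<dots> = conjugate v \<bullet> (A *\<^sub>v v)"
    using A u(1) i v by (auto simp: scalar_prod_def v_def index_mult_mat lessThan_atLeast0 intro!: sum.cong)
  finally have "lam i = Re (conjugate v \<bullet> (A *\<^sub>v v))" by (metis Re_complex_of_real)
  with P v A show ?thesis unfolding psd_mat_def by auto
qed

lemma density_mat_spectral_decomp:
  assumes "density_mat d \<rho>"
  obtains U p where "spectral_decomp \<rho> U p" "unitary_mat d U" "\<rho> = U * diag_real d p * mat_adjoint U"
    "\<forall>i<d. p i \<ge> 0" "(\<Sum>i<d. p i) = 1"
proof -
  have \<rho>: "\<rho> \<in> carrier_mat d d" and P: "psd_mat \<rho>" and tr: "mat_trace \<rho> = 1"
    using assms unfolding density_mat_def by auto
  obtain U p where sd: "spectral_decomp \<rho> U p"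
    using hermitian_spectral_decomp P unfolding psd_mat_def by blast
  have U: "unitary_mat d U" and dec: "\<rho> = U * diag_real d p * mat_adjoint U"
    using spectral_decompD[OF sd] \<rho> by auto
  have "complex_of_real (\<Sum>i<d. p i) = 1"
    using tr mat_trace_unitary_conj_diag_real[OF U, of p] dec by simp
  then have "(\<Sum>i<d. p i) = 1" by (simp only: of_real_eq_1_iff)
  moreover have "\<forall>i<d. p i \<ge> 0" using psd_spectral_decomp_nonneg[OF P sd] \<rho> by auto
  ultimately show ?thesis using that sd U dec by blast
qed

section \<open>Trace norm and fidelity\<close>

definition partial_isometry :: "nat \<Rightarrow> complex mat \<Rightarrow> bool" where
  "partial_isometry n K \<longleftrightarrow> K \<in> carrier_mat n n \<and> K * mat_adjoint K * K = K"

lemma partial_isometry_adjoint: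
  assumes "partial_isometry n K"
  shows "partial_isometry n (mat_adjoint K)"
proof -
  have K: "K \<in> carrier_mat n n" and KK: "K * mat_adjoint K * K = K"
    using assms by (auto simp: partial_isometry_def)
  have "mat_adjoint K * K * mat_adjoint K = mat_adjoint (K * mat_adjoint K * K)"
    using K by (simp add: mat_adjoint_mult[of _ n n _ n] assoc_mult_mat[of _ n n _ n _ n]
        mult_carrier_mat[of _ n n _ n])
  with K KK show ?thesis by (simp add: partial_isometry_def)
qed

lemma partial_isometry_unitary_mult:
  assumes U: "unitary_mat n U" and K: "partial_isometry n K" and W: "unitary_mat n W"
  shows "partial_isometry n (U * K * W)"
proof -
  note u = unitary_matD[OF U] and w = unitary_matD[OF W]
  have K: "K \<in> carrier_mat n n" and KK: "K * mat_adjoint K * K = K"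
    using K by (auto simp: partial_isometry_def)
  have "U * K * W * mat_adjoint (U * K * W) * (U * K * W) = U * (K * mat_adjoint K * K) * W"
    using u w K by (simp add: mat_adjoint_mult[of _ n n _ n] assoc_mult_mat[of _ n n _ n _ n]
        mult_carrier_mat[of _ n n _ n] unitary_mat_cancel[OF U] unitary_mat_cancel[OF W])
  with u w K KK show ?thesis by (simp add: partial_isometry_def)
qed

lemma partial_isometry_row_norm_le:
  assumes K: "partial_isometry n K" and i: "i < n"
  shows "(\<Sum>j<n. (cmod (K $$ (i,j)))\<^sup>2) \<le> 1"
proof -
  have K: "K \<in> carrier_mat n n" and KK: "K * mat_adjoint K * K = K"
    using K by (auto simp: partial_isometry_def)
  \<comment> \<open>\<open>P = K K\<^sup>*\<close> is an orthogonal projection, so \<open>P\<^sub>i\<^sub>i = \<Sum>\<^sub>l |P\<^sub>i\<^sub>l|\<^sup>2 \<ge> P\<^sub>i\<^sub>i\<^sup>2\<close>\<close>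
  define P where "P = K * mat_adjoint K"
  have P: "P \<in> carrier_mat n n" using K by (simp add: P_def)
  have "mat_adjoint P = P" using K by (simp add: P_def mat_adjoint_mult[of _ n n _ n])
  moreover have "P * P = P"
    using K KK by (simp add: P_def flip: assoc_mult_mat[of _ n n _ n _ n])
  ultimately have "P * mat_adjoint P = P" by simp
  define s where "s = (\<Sum>j<n. (cmod (K $$ (i,j)))\<^sup>2)"
  have Pii: "P $$ (i,i) = complex_of_real s"
    unfolding P_def s_def by (rule index_mult_mat_adjoint_diag[OF K i])
  have "complex_of_real s = complex_of_real (\<Sum>l<n. (cmod (P $$ (i,l)))\<^sup>2)"
    using index_mult_mat_adjoint_diag[OF P i] \<open>P * mat_adjoint P = P\<close> Pii by simp
  then have "s = (\<Sum>l<n. (cmod (P $$ (i,l)))\<^sup>2)" by (simp only: of_real_eq_iff)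
  also have "(cmod (P $$ (i,i)))\<^sup>2 \<le> \<dots>"
    using i by (intro member_le_sum) auto
  moreover have "cmod (P $$ (i,i)) = s"
    unfolding Pii norm_of_real by (simp add: s_def sum_nonneg)
  ultimately have "s * s \<le> s * 1" by (simp add: power2_eq_square)
  moreover have "0 \<le> s" by (simp add: s_def sum_nonneg)
  ultimately show ?thesis unfolding s_def[symmetric] by (cases "s = 0") (auto simp: mult_le_cancel_left)
qed

lemma partial_isometry_col_norm_le:
  assumes K: "partial_isometry n K" and j: "j < n"
  shows "(\<Sum>i<n. (cmod (K $$ (i,j)))\<^sup>2) \<le> 1"
proof -
  have "K \<in> carrier_mat n n" using K by (simp add: partial_isometry_def)
  then show ?thesis
    using partial_isometry_row_norm_le[OF partial_isometry_adjoint[OF K] j] j by simp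
qed

lemma diag_real_cong: "(\<And>i. i < n \<Longrightarrow> a i = b i) \<Longrightarrow> diag_real n a = diag_real n b"
  by (rule eq_matI) auto

lemma mat_adjoint_mult_self_diag_nonneg:
  assumes B: "B \<in> carrier_mat n n" and BB: "mat_adjoint B * B = diag_real n c" and k: "k < n"
  shows "0 \<le> c k"
proof -
  have "complex_of_real (c k) = (mat_adjoint B * mat_adjoint (mat_adjoint B)) $$ (k,k)"
    using BB k by simp
  also have "\<dots> = complex_of_real (\<Sum>j<n. (cmod (mat_adjoint B $$ (k,j)))\<^sup>2)"
    by (rule index_mult_mat_adjoint_diag[OF mat_adjoint_carrier[OF B] k])
  finally have "c k = (\<Sum>j<n. (cmod (mat_adjoint B $$ (k,j)))\<^sup>2)" by (simp only: of_real_eq_iff)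
  then show ?thesis by (simp add: sum_nonneg)
qed

lemma partial_isometry_of_diag_gram:
  assumes B: "B \<in> carrier_mat n n" and BB: "mat_adjoint B * B = diag_real n c"
  obtains Y where "partial_isometry n Y" "mat_adjoint Y * B = diag_real n (sqrt \<circ> c)"
proof -
  note simps = assoc_mult_mat[of _ n n _ n _ n] mult_carrier_mat[of _ n n _ n]
  have c: "0 \<le> c k" if "k < n" for k by (rule mat_adjoint_mult_self_diag_nonneg[OF B BB that])
  \<comment> \<open>rescaling the columns of \<open>B\<close> by \<open>1 / \<surd>c\<^sub>k\<close> gives orthonormal columns where \<open>c\<^sub>k > 0\<close> and zero columns elsewhere\<close>
  define g where "g k = (if c k > 0 then 1 / sqrt (c k) else 0)" for k
  define \<pi> :: "nat \<Rightarrow> real" where "\<pi> k = (if c k > 0 then 1 else 0)" for k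
  define Y where "Y = B * diag_real n g"
  have Y: "Y \<in> carrier_mat n n" using B by (simp add: Y_def)
  have Y_adj: "mat_adjoint Y = diag_real n g * mat_adjoint B"
    using B by (simp add: Y_def mat_adjoint_mult[of _ n n _ n])
  have "mat_adjoint Y * Y = diag_real n g * (mat_adjoint B * B) * diag_real n g"
    unfolding Y_adj using B by (simp add: Y_def simps)
  also have "\<dots> = diag_real n (\<lambda>k. g k * c k * g k)"
    by (simp add: BB diag_real_mult_diag_real)
  also have "\<dots> = diag_real n \<pi>"
    by (rule diag_real_cong) (simp add: g_def \<pi>_def field_simps)
  finally have YY: "mat_adjoint Y * Y = diag_real n \<pi>" .
  have "Y * (mat_adjoint Y * Y) = B * (diag_real n g * diag_real n \<pi>)"
    unfolding YY using B by (simp add: Y_def simps)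
  also have "(\<lambda>k. g k * \<pi> k) = g" by (auto simp: g_def \<pi>_def)
  then have "B * (diag_real n g * diag_real n \<pi>) = Y"
    by (simp add: Y_def diag_real_mult_diag_real)
  finally have "partial_isometry n Y"
    using Y by (simp add: partial_isometry_def simps)
  moreover have "mat_adjoint Y * B = diag_real n (sqrt \<circ> c)"
  proof -
    have "mat_adjoint Y * B = diag_real n g * (mat_adjoint B * B)"
      unfolding Y_adj using B by (simp add: simps)
    also have "\<dots> = diag_real n (\<lambda>k. g k * c k)"
      by (simp add: BB diag_real_mult_diag_real)
    also have "\<dots> = diag_real n (sqrt \<circ> c)"
      using c by (intro diag_real_cong) (force simp: g_def field_simps real_div_sqrt)
    finally show ?thesis .
  qed
  ultimately show ?thesis using that by blast
qed

lemma trace_norm_polar: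
  assumes A: "A \<in> carrier_mat n n"
  obtains Z where "partial_isometry n Z" "trace_norm A = Re (mat_trace (A * Z))"
proof -
  define G where "G = mat_adjoint A * A"
  have G: "G \<in> carrier_mat n n" using A by (auto simp: G_def)
  have "mat_adjoint G = G" using A by (simp add: G_def mat_adjoint_mult[of _ n n _ n])
  with G obtain V c where sd: "spectral_decomp G V c"
    using hermitian_spectral_decomp[of G] by (auto simp: hermitian_mat_def)
  note V = spectral_decompD(2)[OF sd carrier_matD(1)[OF G]]
    and G_dec = spectral_decompD(3)[OF sd carrier_matD(1)[OF G]]
  note v = unitary_matD[OF V]
  have "mat_sqrt G = V * diag_real n (sqrt \<circ> c) * mat_adjoint V"
    using mat_fun_spectral_decomp[OF sd] G by simp
  then have trace_norm: "trace_norm A = (\<Sum>k<n. sqrt (c k))"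
    by (simp add: trace_norm_def G_def[symmetric] mat_trace_unitary_conj_diag_real[OF V])
  have B: "A * V \<in> carrier_mat n n" using A v(1) by simp
  have "mat_adjoint (A * V) * (A * V) = mat_adjoint V * G * V"
    using A v(1)
    by (simp add: G_def mat_adjoint_mult[of _ n n _ n] assoc_mult_mat[of _ n n _ n _ n] mult_carrier_mat[of _ n n _ n])
  then have "mat_adjoint (A * V) * (A * V) = diag_real n c"
    using unitary_mat_diagonalizes[OF V] G_dec by simp
  then obtain Y where Y: "partial_isometry n Y" and YB: "mat_adjoint Y * (A * V) = diag_real n (sqrt \<circ> c)"
    using partial_isometry_of_diag_gram[OF B] by blast
  have Y': "mat_adjoint Y \<in> carrier_mat n n" using Y by (simp add: partial_isometry_def)
  have "mat_trace (A * (V * mat_adjoint Y)) = mat_trace ((A * V) * mat_adjoint Y)"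
    using A v(1) Y' by (simp add: assoc_mult_mat[of _ n n _ n _ n])
  also have "\<dots> = mat_trace (mat_adjoint Y * (A * V))"
    using B Y' by (intro mat_trace_mult_comm)
  finally have "trace_norm A = Re (mat_trace (A * (V * mat_adjoint Y)))"
    by (simp add: YB trace_norm mat_trace_diag_real)
  moreover have "V * mat_adjoint Y * 1\<^sub>m n = V * mat_adjoint Y"
    by (rule right_mult_one_mat[OF mult_carrier_mat[OF v(1) Y']])
  then have "partial_isometry n (V * mat_adjoint Y)"
    using partial_isometry_unitary_mult[OF V partial_isometry_adjoint[OF Y] unitary_mat_one] by simp
  ultimately show ?thesis using that by blast
qed

lemma mat_trace_unitary_conj_product:
  assumes U: "unitary_mat n U" and W: "unitary_mat n W" and Z: "Z \<in> carrier_mat n n"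
  shows "mat_trace (U * diag_real n a * mat_adjoint U * (W * diag_real n b * mat_adjoint W) * Z) =
    (\<Sum>i<n. \<Sum>j<n. complex_of_real (a i * b j) * (mat_adjoint U * W) $$ (i,j) * (mat_adjoint W * Z * U) $$ (j,i))"
proof -
  note simps = assoc_mult_mat[of _ n n _ n _ n] mult_carrier_mat[of _ n n _ n]
  note u = unitary_matD[OF U] and w = unitary_matD[OF W]
  define X where "X = diag_real n a * mat_adjoint U * (W * diag_real n b * mat_adjoint W) * Z"
  have X: "X \<in> carrier_mat n n" using u w Z by (simp add: X_def simps)
  have "mat_trace (U * diag_real n a * mat_adjoint U * (W * diag_real n b * mat_adjoint W) * Z) = mat_trace (U * X)"
    using u w Z by (simp add: X_def simps)
  also have "\<dots> = mat_trace (X * U)" using u X by (intro mat_trace_mult_comm) auto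
  also have "X * U = diag_real n a * (mat_adjoint U * W) * diag_real n b * (mat_adjoint W * Z * U)"
    using u w Z by (simp add: X_def simps)
  also have "mat_trace \<dots> =
      (\<Sum>i<n. \<Sum>j<n. complex_of_real (a i * b j) * (mat_adjoint U * W) $$ (i,j) * (mat_adjoint W * Z * U) $$ (j,i))"
    by (rule mat_trace_diag_real_sandwich) (use u w Z in \<open>simp_all add: mult_carrier_mat[of _ n n _ n]\<close>)
  finally show ?thesis .
qed

lemma re_weighted_bilinear_le_am_gm:
  fixes x y :: "nat \<Rightarrow> real" and M K :: "nat \<Rightarrow> nat \<Rightarrow> complex" and t :: real
  assumes x: "\<forall>i<n. x i \<ge> 0" "(\<Sum>i<n. (x i)\<^sup>2) = 1" and y: "\<forall>j<n. y j \<ge> 0" "(\<Sum>j<n. (y j)\<^sup>2) = 1"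
    and K_rows: "\<forall>j<n. (\<Sum>i<n. (cmod (K j i))\<^sup>2) \<le> 1"
    and K_cols: "\<forall>i<n. (\<Sum>j<n. (cmod (K j i))\<^sup>2) \<le> 1"
    and t: "t > 0"
  shows "Re (\<Sum>i<n. \<Sum>j<n. complex_of_real (x i * y j) * M i j * K j i)
     \<le> (t * (\<Sum>i<n. \<Sum>j<n. x i * y j * (cmod (M i j))\<^sup>2) + 1 / t) / 2"
proof -
  have "Re (\<Sum>i<n. \<Sum>j<n. complex_of_real (x i * y j) * M i j * K j i)
      \<le> (\<Sum>i<n. \<Sum>j<n. cmod (complex_of_real (x i * y j) * M i j * K j i))"
    by (rule order_trans[OF complex_Re_le_cmod order_trans[OF norm_sum sum_mono[OF norm_sum]]])
  also have "\<dots> = (\<Sum>i<n. \<Sum>j<n. x i * y j * (cmod (M i j) * cmod (K j i)))"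
    using x y by (intro sum.cong refl) (simp add: norm_mult abs_mult)
  also have "\<dots> \<le> (\<Sum>i<n. \<Sum>j<n. x i * y j * ((t * (cmod (M i j))\<^sup>2 + (cmod (K j i))\<^sup>2 / t) / 2))"
  proof (intro sum_mono mult_left_mono)
    fix i j assume "i \<in> {..<n}" "j \<in> {..<n}"
    then show "x i * y j \<ge> 0" using x y by simp
    have "0 \<le> (t * cmod (M i j) - cmod (K j i))\<^sup>2" by simp
    then show "cmod (M i j) * cmod (K j i) \<le> (t * (cmod (M i j))\<^sup>2 + (cmod (K j i))\<^sup>2 / t) / 2"
      using t by (simp add: field_simps power2_eq_square algebra_simps)
  qed
  also have "\<dots> = t / 2 * (\<Sum>i<n. \<Sum>j<n. x i * y j * (cmod (M i j))\<^sup>2)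
      + 1 / (2 * t) * (\<Sum>i<n. \<Sum>j<n. x i * y j * (cmod (K j i))\<^sup>2)"
  proof -
    have "(\<Sum>i<n. \<Sum>j<n. x i * y j * ((t * (cmod (M i j))\<^sup>2 + (cmod (K j i))\<^sup>2 / t) / 2))
       = (\<Sum>i<n. \<Sum>j<n. t / 2 * (x i * y j * (cmod (M i j))\<^sup>2) + 1 / (2 * t) * (x i * y j * (cmod (K j i))\<^sup>2))"
      using t by (intro sum.cong refl) (simp add: field_simps)
    then show ?thesis by (simp only: sum.distrib sum_distrib_left)
  qed
  also have "(\<Sum>i<n. \<Sum>j<n. x i * y j * (cmod (K j i))\<^sup>2) \<le> 1"
  proof -
    have "(\<Sum>i<n. \<Sum>j<n. x i * y j * (cmod (K j i))\<^sup>2)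
        \<le> (\<Sum>i<n. \<Sum>j<n. (x i)\<^sup>2 / 2 * (cmod (K j i))\<^sup>2 + (y j)\<^sup>2 / 2 * (cmod (K j i))\<^sup>2)"
    proof (intro sum_mono)
      fix i j
      have "x i * y j \<le> (x i)\<^sup>2 / 2 + (y j)\<^sup>2 / 2"
        using sum_squares_bound[of "x i" "y j"] by simp
      then show "x i * y j * (cmod (K j i))\<^sup>2 \<le> (x i)\<^sup>2 / 2 * (cmod (K j i))\<^sup>2 + (y j)\<^sup>2 / 2 * (cmod (K j i))\<^sup>2"
        by (metis distrib_right mult_right_mono zero_le_power2)
    qed
    also have "\<dots> = (\<Sum>i<n. (x i)\<^sup>2 / 2 * (\<Sum>j<n. (cmod (K j i))\<^sup>2)) + (\<Sum>j<n. (y j)\<^sup>2 / 2 * (\<Sum>i<n. (cmod (K j i))\<^sup>2))"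
      by (simp add: sum.distrib sum_distrib_left) (subst sum.swap, rule refl)
    also have "\<dots> \<le> (\<Sum>i<n. (x i)\<^sup>2 / 2 * 1) + (\<Sum>j<n. (y j)\<^sup>2 / 2 * 1)"
      using K_rows K_cols by (intro add_mono sum_mono mult_left_mono) auto
    also have "\<dots> = 1" using x y by (simp flip: sum_divide_distrib)
    finally show ?thesis .
  qed
  then have "1 / (2 * t) * (\<Sum>i<n. \<Sum>j<n. x i * y j * (cmod (K j i))\<^sup>2) \<le> 1 / (2 * t) * 1"
    using t by (intro mult_left_mono) auto
  finally show ?thesis using t by (simp add: field_simps)
qed

lemma le_sqrt_of_am_gm_bound:
  fixes F H :: real
  assumes bound: "\<And>t. t > 0 \<Longrightarrow> F \<le> (t * H + 1 / t) / 2" and H: "0 \<le> H"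
  shows "F \<le> sqrt H"
proof (cases "H = 0")
  case True
  show ?thesis
  proof (rule ccontr)
    assume "\<not> F \<le> sqrt H"
    then have "F > 0" using True by simp
    then show False using bound[of "1 / F"] True by (simp add: field_simps)
  qed
next
  case False
  then have "sqrt H > 0" using H by simp
  then have "F * sqrt H \<le> sqrt H * sqrt H"
    using bound[of "1 / sqrt H"] H by (simp add: field_simps)
  then show ?thesis using \<open>sqrt H > 0\<close> by (rule mult_right_le_imp_le)
qed

lemma fidelity_le_sqrt_overlap:
  assumes sd_\<rho>: "spectral_decomp \<rho> U p" and sd_\<sigma>: "spectral_decomp \<sigma> W r"
    and dims: "dim_row \<rho> = n" "dim_row \<sigma> = n"
    and p: "\<forall>i<n. 0 \<le> p i" "(\<Sum>i<n. p i) = 1" and r: "\<forall>j<n. 0 \<le> r j" "(\<Sum>j<n. r j) = 1"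
  shows "fidelity \<rho> \<sigma> \<le>
    sqrt (\<Sum>i<n. \<Sum>j<n. (cmod ((mat_adjoint U * W) $$ (i,j)))\<^sup>2 * sqrt (p i) * sqrt (r j))"
proof -
  have U: "unitary_mat n U" and W: "unitary_mat n W"
    using spectral_decompD(2)[OF sd_\<rho> dims(1)] spectral_decompD(2)[OF sd_\<sigma> dims(2)] .
  note u = unitary_matD[OF U] and w = unitary_matD[OF W]
  have sqrt_\<rho>: "mat_sqrt \<rho> = U * diag_real n (sqrt \<circ> p) * mat_adjoint U"
    and sqrt_\<sigma>: "mat_sqrt \<sigma> = W * diag_real n (sqrt \<circ> r) * mat_adjoint W"
    using mat_fun_spectral_decomp[OF sd_\<rho>] mat_fun_spectral_decomp[OF sd_\<sigma>] dims by simp_all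
  have "mat_sqrt \<rho> * mat_sqrt \<sigma> \<in> carrier_mat n n"
    unfolding sqrt_\<rho> sqrt_\<sigma> using u w by (simp add: mult_carrier_mat[of _ n n _ n])
  then obtain Z where Z: "partial_isometry n Z"
    and polar: "trace_norm (mat_sqrt \<rho> * mat_sqrt \<sigma>) = Re (mat_trace (mat_sqrt \<rho> * mat_sqrt \<sigma> * Z))"
    by (rule trace_norm_polar)
  define M where "M = mat_adjoint U * W"
  define K where "K = mat_adjoint W * Z * U"
  have K: "partial_isometry n K"
    unfolding K_def by (rule partial_isometry_unitary_mult[OF unitary_mat_adjoint[OF W] Z U])
  define H where "H = (\<Sum>i<n. \<Sum>j<n. sqrt (p i) * sqrt (r j) * (cmod (M $$ (i,j)))\<^sup>2)"
  have F: "fidelity \<rho> \<sigma> =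
      Re (\<Sum>i<n. \<Sum>j<n. complex_of_real (sqrt (p i) * sqrt (r j)) * M $$ (i,j) * K $$ (j,i))"
    unfolding fidelity_def polar using Z
    by (simp add: sqrt_\<rho> sqrt_\<sigma> M_def K_def partial_isometry_def mat_trace_unitary_conj_product[OF U W])
  have "fidelity \<rho> \<sigma> \<le> (t * H + 1 / t) / 2" if "t > 0" for t
    unfolding F H_def
    by (rule re_weighted_bilinear_le_am_gm[OF _ _ _ _ _ _ that])
      (use p r partial_isometry_row_norm_le[OF K] partial_isometry_col_norm_le[OF K] in auto)
  then have "fidelity \<rho> \<sigma> \<le> sqrt H"
    by (rule le_sqrt_of_am_gm_bound) (use p r in \<open>auto simp: H_def intro!: sum_nonneg\<close>)
  then show ?thesis by (simp add: H_def M_def mult_ac)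
qed

section \<open>Relative entropy to the depolarized state\<close>

lemma depolarize_unitary_conj_diag_real:
  assumes W: "unitary_mat d W"
  shows "depolarize d e (W * diag_real d r * mat_adjoint W) =
    W * diag_real d (\<lambda>j. (1 - e) * r j + e / real d) * mat_adjoint W"
proof -
  note w = unitary_matD[OF W]
  let ?conj = "\<lambda>a. W * diag_real d a * mat_adjoint W"
  have carrier: "?conj a \<in> carrier_mat d d" for a
    using w(1) by (simp add: mult_carrier_mat[of _ d d _ d])
  have "diag_real d (\<lambda>_. 1) = 1\<^sub>m d" by (rule eq_matI) auto
  then have one: "1\<^sub>m d = ?conj (\<lambda>_. 1)" using w by simp
  have entry: "depolarize d e (?conj r) $$ (i,j) = ?conj (\<lambda>j. (1 - e) * r j + e / real d) $$ (i,j)"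
    if ij: "i < d" "j < d" for i j
  proof -
    have "depolarize d e (?conj r) $$ (i,j) = complex_of_real (1 - e) * ?conj r $$ (i,j)
        + complex_of_real (e / real d) * ?conj (\<lambda>_. 1) $$ (i,j)"
      unfolding depolarize_def using ij carrier_matD[OF carrier[of r]] by (simp add: one[symmetric])
    also have "\<dots> = (\<Sum>k<d. W $$ (i,k) * complex_of_real ((1 - e) * r k + e / real d) * cnj (W $$ (j,k)))"
      unfolding index_conj_diag_real[OF w(1) ij]
      by (simp add: sum_distrib_left algebra_simps flip: sum.distrib)
    also have "\<dots> = ?conj (\<lambda>j. (1 - e) * r j + e / real d) $$ (i,j)"
      by (rule index_conj_diag_real[OF w(1) ij, symmetric])
    finally show ?thesis .
  qed
  show ?thesis
    by (rule eq_matI) (use entry carrier_matD[OF carrier] in \<open>simp_all add: depolarize_def\<close>)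
qed


lemma spectral_decomp_depolarize:
  assumes sd: "spectral_decomp \<rho> W r" and d: "dim_row \<rho> = d"
  shows "spectral_decomp (depolarize d e \<rho>) W (\<lambda>j. (1 - e) * r j + e / real d)"
    and "dim_row (depolarize d e \<rho>) = d"
proof -
  note W = spectral_decompD(2)[OF sd d] and \<rho> = spectral_decompD(3)[OF sd d]
  show "dim_row (depolarize d e \<rho>) = d" by (simp add: depolarize_def)
  then show "spectral_decomp (depolarize d e \<rho>) W (\<lambda>j. (1 - e) * r j + e / real d)"
    using W unitary_matD(1)[OF W]
    by (simp add: spectral_decomp_def \<rho> depolarize_unitary_conj_diag_real mult_carrier_mat[of _ d d _ d])
qed

lemma mat_trace_unitary_conj_mult:
  assumes U: "unitary_mat n U" and W: "unitary_mat n W"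
  shows "mat_trace (U * diag_real n a * mat_adjoint U * (W * diag_real n b * mat_adjoint W)) =
    complex_of_real (\<Sum>i<n. \<Sum>j<n. (cmod ((mat_adjoint U * W) $$ (i,j)))\<^sup>2 * a i * b j)"
proof -
  note u = unitary_matD[OF U] and w = unitary_matD[OF W]
  have "mat_trace (U * diag_real n a * mat_adjoint U * (W * diag_real n b * mat_adjoint W)) =
      mat_trace (U * diag_real n a * mat_adjoint U * (W * diag_real n b * mat_adjoint W) * 1\<^sub>m n)"
    using u(1) w(1) by (simp add: mult_carrier_mat[of _ n n _ n])
  also have "\<dots> = (\<Sum>i<n. \<Sum>j<n. complex_of_real (a i * b j) *
      (mat_adjoint U * W) $$ (i,j) * (mat_adjoint W * 1\<^sub>m n * U) $$ (j,i))"
    by (rule mat_trace_unitary_conj_product[OF U W]) simp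
  also have "\<dots> = (\<Sum>i<n. \<Sum>j<n. complex_of_real ((cmod ((mat_adjoint U * W) $$ (i,j)))\<^sup>2 * a i * b j))"
  proof (intro sum.cong refl)
    fix i j assume "i \<in> {..<n}" "j \<in> {..<n}"
    then have "(mat_adjoint W * 1\<^sub>m n * U) $$ (j,i) = cnj ((mat_adjoint U * W) $$ (i,j))"
      using u(1) w(1) by (simp add: mat_adjoint_mult[of _ n n _ n] flip: index_mat_adjoint)
    then show "complex_of_real (a i * b j) * (mat_adjoint U * W) $$ (i,j) * (mat_adjoint W * 1\<^sub>m n * U) $$ (j,i)
        = complex_of_real ((cmod ((mat_adjoint U * W) $$ (i,j)))\<^sup>2 * a i * b j)"
      by (simp add: mult_ac flip: complex_norm_square)
  qed
  finally show ?thesis by simp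
qed

lemma unitary_conj_diag_real_mult:
  assumes U: "unitary_mat n U"
  shows "U * diag_real n a * mat_adjoint U * (U * diag_real n b * mat_adjoint U) =
    U * diag_real n (\<lambda>k. a k * b k) * mat_adjoint U"
  using unitary_matD[OF U]
  by (simp add: assoc_mult_mat[of _ n n _ n _ n] mult_carrier_mat[of _ n n _ n] unitary_mat_cancel[OF U]
      flip: diag_real_mult_diag_real)

lemma kl_div_spectral_decomp:
  assumes sd_\<rho>: "spectral_decomp \<rho> U p" and sd_\<sigma>: "spectral_decomp \<sigma> W q"
    and dims: "dim_row \<rho> = n" "dim_row \<sigma> = n"
  shows "kl_div \<rho> \<sigma> = (\<Sum>i<n. p i * ln (p i))
    - (\<Sum>i<n. \<Sum>j<n. (cmod ((mat_adjoint U * W) $$ (i,j)))\<^sup>2 * p i * ln (q j))"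
proof -
  note U = spectral_decompD(2)[OF sd_\<rho> dims(1)] and W = spectral_decompD(2)[OF sd_\<sigma> dims(2)]
    and \<rho> = spectral_decompD(3)[OF sd_\<rho> dims(1)]
  have ln_\<rho>: "mat_ln \<rho> = U * diag_real n (ln \<circ> p) * mat_adjoint U"
    and ln_\<sigma>: "mat_ln \<sigma> = W * diag_real n (ln \<circ> q) * mat_adjoint W"
    using mat_fun_spectral_decomp[OF sd_\<rho>] mat_fun_spectral_decomp[OF sd_\<sigma>] dims by simp_all
  have "X * diag_real n a * mat_adjoint X \<in> carrier_mat n n" if "X \<in> carrier_mat n n" for X a
    using that by (simp add: mult_carrier_mat[of _ n n _ n])
  then have "\<rho> \<in> carrier_mat n n" "mat_ln \<rho> \<in> carrier_mat n n" "mat_ln \<sigma> \<in> carrier_mat n n"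
    unfolding ln_\<rho> ln_\<sigma> unfolding \<rho> using unitary_matD(1)[OF U] unitary_matD(1)[OF W] by simp_all
  then have "mat_trace (\<rho> * (mat_ln \<rho> - mat_ln \<sigma>)) = mat_trace (\<rho> * mat_ln \<rho>) - mat_trace (\<rho> * mat_ln \<sigma>)"
    by (simp add: mult_minus_distrib_mat[of _ n n _ n] mat_trace_diff[of _ n] mult_carrier_mat[of _ n n _ n])
  also have "mat_trace (\<rho> * mat_ln \<rho>) = complex_of_real (\<Sum>i<n. p i * ln (p i))"
    unfolding ln_\<rho> unfolding \<rho> unitary_conj_diag_real_mult[OF U] mat_trace_unitary_conj_diag_real[OF U] by simp
  also have "mat_trace (\<rho> * mat_ln \<sigma>) =
      complex_of_real (\<Sum>i<n. \<Sum>j<n. (cmod ((mat_adjoint U * W) $$ (i,j)))\<^sup>2 * p i * ln (q j))"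
    unfolding ln_\<sigma> unfolding \<rho> mat_trace_unitary_conj_mult[OF U W] by simp
  finally show ?thesis by (simp add: kl_div_def)
qed

section \<open>Scalar and classical estimates\<close>

lemma one_minus_inverse_le_ln:
  fixes s :: real
  assumes s: "0 < s"
  shows "1 - 1 / s \<le> ln s"
proof -
  have "ln (1/s) \<le> 1/s - 1" using s by (intro ln_le_minus_one) simp
  then show ?thesis using s by (simp add: ln_div)
qed

lemma neg_two_ln_le_quadratic_ge_one:
  fixes s C :: real
  assumes s: "1 \<le> s" and C: "2 \<le> C"
  shows "- 2 * ln s \<le> 2 * (1 - s) + C * (1 - s)\<^sup>2"
proof -
  have "- 2 * ln s \<le> - 2 * (1 - 1 / s)" using one_minus_inverse_le_ln[of s] s by simp
  also have "\<dots> \<le> 2 * (1 - s) + C * (1 - s)\<^sup>2"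
  proof -
    have "2 / s \<le> 2" using s by (simp add: divide_le_eq)
    then have "0 \<le> (1 - s)\<^sup>2 * (C - 2 / s)" using C by simp
    also have "\<dots> = 2 * (1 - s) + C * (1 - s)\<^sup>2 - (- 2 * (1 - 1 / s))"
      using s by (simp add: field_simps power2_eq_square)
    finally show ?thesis by simp
  qed
  finally show ?thesis .
qed

lemma neg_two_ln_le_quadratic_lt_one:
  fixes s :: real
  assumes s: "0 < s" "s < 1"
  shows "- 2 * ln s \<le> 2 * (1 - s) + (3 - 4 * ln s) * (1 - s)\<^sup>2"
proof -
  define u where "u = 1 - s"
  define l where "l = - ln s"
  have u: "0 < u" "u < 1" using s by (auto simp: u_def)
  have l: "0 \<le> l" "l \<le> u / s"
    using s one_minus_inverse_le_ln[of s] by (auto simp: l_def u_def field_simps)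
  have "l * (2 - 4 * u\<^sup>2) \<le> 2 * u + 3 * u\<^sup>2"
  proof (cases "2 - 4 * u\<^sup>2 \<le> 0")
    case True
    then have "l * (2 - 4 * u\<^sup>2) \<le> 0" using l by (simp add: mult_nonneg_nonpos)
    moreover have "0 \<le> 2 * u + 3 * u\<^sup>2" using u by simp
    ultimately show ?thesis by linarith
  next
    case False
    then have "l * (2 - 4 * u\<^sup>2) \<le> u / s * (2 - 4 * u\<^sup>2)" using l by (intro mult_right_mono) auto
    also have "\<dots> \<le> 2 * u + 3 * u\<^sup>2"
    proof -
      have "0 \<le> u * (1 + u)" using u by simp
      then have "2 - 4 * u\<^sup>2 \<le> s * (2 + 3 * u)" by (simp add: u_def power2_eq_square algebra_simps)
      then have "u * (2 - 4 * u\<^sup>2) \<le> u * (s * (2 + 3 * u))" using u by (intro mult_left_mono) auto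
      then show ?thesis using s by (simp add: field_simps power2_eq_square)
    qed
    finally show ?thesis .
  qed
  then have "2 * l \<le> 2 * u + (3 + 4 * l) * u\<^sup>2" by (simp add: algebra_simps)
  then show ?thesis by (simp add: l_def u_def)
qed

lemma neg_two_ln_le_quadratic:
  fixes s s0 :: real
  assumes s0: "0 < s0" "s0 \<le> s" "s0 \<le> 1"
  shows "- 2 * ln s \<le> 2 * (1 - s) + (3 - 4 * ln s0) * (1 - s)\<^sup>2"
proof (cases "1 \<le> s")
  case True
  have "ln s0 \<le> 0" using s0 by simp
  with True show ?thesis by (intro neg_two_ln_le_quadratic_ge_one) auto
next
  case False
  have "ln s0 \<le> ln s" using s0 by simp
  then have "(3 - 4 * ln s) * (1 - s)\<^sup>2 \<le> (3 - 4 * ln s0) * (1 - s)\<^sup>2"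
    by (intro mult_right_mono) auto
  with neg_two_ln_le_quadratic_lt_one[of s] False s0 show ?thesis by linarith
qed

lemma entropy_term_le_hellinger:
  fixes p q \<delta> :: real
  assumes p: "0 \<le> p" "p \<le> 1" and q: "\<delta> \<le> q" and \<delta>: "0 < \<delta>" "\<delta> \<le> 1"
  shows "p * ln p - p * ln q \<le> 2 * (p - sqrt p * sqrt q) + (3 - 2 * ln \<delta>) * (sqrt p - sqrt q)\<^sup>2"
proof (cases "p = 0")
  case True
  have "ln \<delta> \<le> 0" using \<delta> by simp
  then have "3 - 2 * ln \<delta> \<ge> 0" by linarith
  then have "(3 - 2 * ln \<delta>) * (sqrt q)\<^sup>2 \<ge> 0" by (intro mult_nonneg_nonneg) auto
  then show ?thesis using True by simp
next
  case False
  then have pp: "p > 0" using p by simp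
  have qp: "q > 0" using q \<delta> by simp
  define s where "s = sqrt q / sqrt p"
  have s0: "sqrt \<delta> \<le> s"
  proof -
    have "sqrt \<delta> \<le> sqrt q" using q by simp
    also have "sqrt q \<le> sqrt q / sqrt p"
      using pp p qp by (simp add: le_divide_eq real_sqrt_le_1_iff mult_left_le)
    finally show ?thesis by (simp add: s_def)
  qed
  have sc: "- 2 * ln s \<le> 2 * (1 - s) + (3 - 4 * ln (sqrt \<delta>)) * (1 - s)\<^sup>2"
    by (rule neg_two_ln_le_quadratic) (use \<delta> s0 in auto)
  have lnsd: "ln (sqrt \<delta>) = ln \<delta> / 2" using \<delta> by (simp add: ln_sqrt)
  have lns: "- 2 * ln s = ln p - ln q"
  proof -
    have "ln s = ln (sqrt q) - ln (sqrt p)" using pp qp by (simp add: s_def ln_div)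
    then show ?thesis using pp qp by (simp add: ln_sqrt)
  qed
  have sq: "sqrt q = s * sqrt p" using pp by (simp add: s_def)
  have "p * ln p - p * ln q = p * (- 2 * ln s)" using lns by (simp add: algebra_simps)
  also have "\<dots> \<le> p * (2 * (1 - s) + (3 - 2 * ln \<delta>) * (1 - s)\<^sup>2)"
    using sc lnsd pp by (intro mult_left_mono) auto
  also have "\<dots> = 2 * (p - sqrt p * sqrt q) + (3 - 2 * ln \<delta>) * (sqrt p - sqrt q)\<^sup>2"
  proof -
    have alg: "a\<^sup>2 * (2 * (1 - s) + C * (1 - s)\<^sup>2) = 2 * (a\<^sup>2 - a * (s * a)) + C * (a - s * a)\<^sup>2" for a C :: real
      by (simp add: power2_eq_square algebra_simps)
    have pp2: "p = (sqrt p)\<^sup>2" using pp by simp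
    show ?thesis unfolding sq using alg[of "sqrt p" "3 - 2 * ln \<delta>"] pp2 by simp
  qed
  finally show ?thesis .
qed

lemma relative_entropy_le_overlap:
  fixes p q :: "nat \<Rightarrow> real" and B :: "nat \<Rightarrow> nat \<Rightarrow> real"
  assumes p: "\<forall>i<d. 0 \<le> p i" "(\<Sum>i<d. p i) = 1"
    and q: "\<forall>j<d. \<delta> \<le> q j" "(\<Sum>j<d. q j) = 1" and \<delta>: "0 < \<delta>" "\<delta> \<le> 1"
    and B: "\<forall>i<d. \<forall>j<d. 0 \<le> B i j" "\<forall>i<d. (\<Sum>j<d. B i j) = 1" "\<forall>j<d. (\<Sum>i<d. B i j) = 1"
  shows "(\<Sum>i<d. p i * ln (p i)) - (\<Sum>i<d. \<Sum>j<d. B i j * p i * ln (q j))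
    \<le> (8 - 4 * ln \<delta>) * (1 - (\<Sum>i<d. \<Sum>j<d. B i j * sqrt (p i) * sqrt (q j)))"
proof -
  define C where "C = 3 - 2 * ln \<delta>"
  have p1: "p i \<le> 1" if "i < d" for i
    using p member_le_sum[of i "{..<d}" p] that by auto
  have q0: "0 \<le> q j" if "j < d" for j using q \<delta> that by force
  have "(\<Sum>i<d. p i * ln (p i)) - (\<Sum>i<d. \<Sum>j<d. B i j * p i * ln (q j))
      = (\<Sum>i<d. \<Sum>j<d. B i j * (p i * ln (p i) - p i * ln (q j)))"
    using B(2) by (simp add: sum_subtractf algebra_simps flip: sum_distrib_right sum_distrib_left)
  also have "\<dots> \<le> (\<Sum>i<d. \<Sum>j<d. B i j * (2 * (p i - sqrt (p i) * sqrt (q j)) + C * (sqrt (p i) - sqrt (q j))\<^sup>2))"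
    unfolding C_def
    by (intro sum_mono mult_left_mono entropy_term_le_hellinger) (use p p1 q \<delta> B(1) in auto)
  also have "\<dots> = (2 + C) * (\<Sum>i<d. \<Sum>j<d. B i j * p i) + C * (\<Sum>i<d. \<Sum>j<d. B i j * q j)
      - (2 + 2 * C) * (\<Sum>i<d. \<Sum>j<d. B i j * sqrt (p i) * sqrt (q j))"
  proof -
    have "B i j * (2 * (p i - sqrt (p i) * sqrt (q j)) + C * (sqrt (p i) - sqrt (q j))\<^sup>2) =
        (2 + C) * (B i j * p i) + C * (B i j * q j) - (2 + 2 * C) * (B i j * sqrt (p i) * sqrt (q j))"
      if "i < d" "j < d" for i j
      using p(1) q0 that by (simp add: power2_eq_square algebra_simps)
    then show ?thesis
      by (simp add: sum.distrib sum_subtractf sum_distrib_left)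
  qed
  also have "(\<Sum>i<d. \<Sum>j<d. B i j * p i) = 1"
    using B(2) p(2) by (simp flip: sum_distrib_right)
  also have "(\<Sum>i<d. \<Sum>j<d. B i j * q j) = 1"
    using B(3) q(2) by (subst sum.swap) (simp flip: sum_distrib_right)
  finally show ?thesis by (simp add: C_def algebra_simps)
qed

lemma overlap_depolarized_ge:
  fixes p r :: "nat \<Rightarrow> real" and B :: "nat \<Rightarrow> nat \<Rightarrow> real"
  assumes p: "\<forall>i<d. 0 \<le> p i" and B: "\<forall>i<d. \<forall>j<d. 0 \<le> B i j"
    and r: "\<forall>j<d. 0 \<le> r j" and \<epsilon>: "0 < \<epsilon>" "\<epsilon> \<le> 1/2" and \<delta>: "0 \<le> \<delta>"
    and overlap: "(1 - \<epsilon>)\<^sup>2 \<le> (\<Sum>i<d. \<Sum>j<d. B i j * sqrt (p i) * sqrt (r j))"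
  shows "(1 - 2 * \<epsilon>)\<^sup>2 \<le> (\<Sum>i<d. \<Sum>j<d. B i j * sqrt (p i) * sqrt ((1 - 2 * \<epsilon>) * r j + \<delta>))"
proof -
  have "(1 - 2 * \<epsilon>)\<^sup>2 = (1 - 2 * \<epsilon>) * (1 - 2 * \<epsilon>)" by (simp add: power2_eq_square)
  also have "\<dots> \<le> sqrt (1 - 2 * \<epsilon>) * (1 - \<epsilon>)\<^sup>2"
  proof (rule mult_mono)
    show "1 - 2 * \<epsilon> \<le> sqrt (1 - 2 * \<epsilon>)"
      using \<epsilon> by (intro real_le_rsqrt) (simp add: power2_eq_square mult_left_le)
    show "1 - 2 * \<epsilon> \<le> (1 - \<epsilon>)\<^sup>2" by (simp add: power2_eq_square algebra_simps)
  qed (use \<epsilon> in auto)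
  also have "\<dots> \<le> sqrt (1 - 2 * \<epsilon>) * (\<Sum>i<d. \<Sum>j<d. B i j * sqrt (p i) * sqrt (r j))"
    using overlap \<epsilon> by (intro mult_left_mono) auto
  also have "\<dots> = (\<Sum>i<d. \<Sum>j<d. B i j * sqrt (p i) * sqrt ((1 - 2 * \<epsilon>) * r j))"
    by (simp add: sum_distrib_left real_sqrt_mult mult_ac)
  also have "\<dots> \<le> (\<Sum>i<d. \<Sum>j<d. B i j * sqrt (p i) * sqrt ((1 - 2 * \<epsilon>) * r j + \<delta>))"
    using p B \<delta> by (intro sum_mono mult_left_mono) auto
  finally show ?thesis .
qed

lemma depolarized_classical_kl_bound:
  fixes p r :: "nat \<Rightarrow> real" and B :: "nat \<Rightarrow> nat \<Rightarrow> real"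
  assumes d: "d \<ge> 1" and \<epsilon>: "0 < \<epsilon>" "\<epsilon> \<le> 1/2"
    and p: "\<forall>i<d. 0 \<le> p i" "(\<Sum>i<d. p i) = 1" and r: "\<forall>j<d. 0 \<le> r j" "(\<Sum>j<d. r j) = 1"
    and B: "\<forall>i<d. \<forall>j<d. 0 \<le> B i j" "\<forall>i<d. (\<Sum>j<d. B i j) = 1" "\<forall>j<d. (\<Sum>i<d. B i j) = 1"
    and overlap: "(1 - \<epsilon>)\<^sup>2 \<le> (\<Sum>i<d. \<Sum>j<d. B i j * sqrt (p i) * sqrt (r j))"
  shows "(\<Sum>i<d. p i * ln (p i)) - (\<Sum>i<d. \<Sum>j<d. B i j * p i * ln ((1 - 2 * \<epsilon>) * r j + 2 * \<epsilon> / d))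
    \<le> 16 * \<epsilon> * (2 + ln (real d / (2 * \<epsilon>)))"
proof -
  define \<delta> where "\<delta> = 2 * \<epsilon> / d"
  define q where "q j = (1 - 2 * \<epsilon>) * r j + \<delta>" for j
  have \<delta>: "0 < \<delta>" "\<delta> \<le> 1" using \<epsilon> d by (auto simp: \<delta>_def field_simps)
  have q: "\<forall>j<d. \<delta> \<le> q j" "(\<Sum>j<d. q j) = 1"
    using r \<epsilon> d by (auto simp: q_def \<delta>_def sum.distrib simp flip: sum_distrib_left)
  have "1 - (\<Sum>i<d. \<Sum>j<d. B i j * sqrt (p i) * sqrt (q j)) \<le> 1 - (1 - 2 * \<epsilon>)\<^sup>2"
    using overlap_depolarized_ge[OF p(1) B(1) r(1) \<epsilon> _ overlap, of \<delta>] \<delta> by (simp add: q_def)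
  also have "\<dots> \<le> 4 * \<epsilon>" by (simp add: power2_eq_square algebra_simps)
  finally have "(8 - 4 * ln \<delta>) * (1 - (\<Sum>i<d. \<Sum>j<d. B i j * sqrt (p i) * sqrt (q j))) \<le> (8 - 4 * ln \<delta>) * (4 * \<epsilon>)"
    using \<delta> ln_le_minus_one[of \<delta>] by (intro mult_left_mono) auto
  also have "\<dots> = 16 * \<epsilon> * (2 + ln (real d / (2 * \<epsilon>)))"
    using \<epsilon> d by (simp add: \<delta>_def ln_div algebra_simps)
  finally show ?thesis
    using relative_entropy_le_overlap[OF p q \<delta> B] by (simp add: q_def \<delta>_def)
qed

theorem theorem2p34:
  fixes d :: nat and \<rho> \<rho>hat :: "complex mat" and \<epsilon> :: real
  assumes "density_mat d \<rho>" and "density_mat d \<rho>hat"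
    and "0 < \<epsilon>" and "\<epsilon> \<le> 1/2"
    and "1 - fidelity \<rho> \<rho>hat \<le> \<epsilon>"
  shows "kl_div \<rho> (depolarize d (2 * \<epsilon>) \<rho>hat) \<le> 16 * \<epsilon> * (2 + ln (real d / (2 * \<epsilon>)))"
proof -
  obtain U p where sd_\<rho>: "spectral_decomp \<rho> U p" and U: "unitary_mat d U"
    and p: "\<forall>i<d. p i \<ge> 0" "(\<Sum>i<d. p i) = 1"
    using density_mat_spectral_decomp[OF assms(1)] by metis
  obtain W r where sd_\<rho>hat: "spectral_decomp \<rho>hat W r" and W: "unitary_mat d W"
    and r: "\<forall>j<d. r j \<ge> 0" "(\<Sum>j<d. r j) = 1"
    using density_mat_spectral_decomp[OF assms(2)] by metis
  have dims: "dim_row \<rho> = d" "dim_row \<rho>hat = d" using assms(1,2) by (auto simp: density_mat_def)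
  define B where "B i j = (cmod ((mat_adjoint U * W) $$ (i,j)))\<^sup>2" for i j
  have "\<bar>1 - \<epsilon>\<bar> \<le> sqrt (\<Sum>i<d. \<Sum>j<d. B i j * sqrt (p i) * sqrt (r j))"
    using fidelity_le_sqrt_overlap[OF sd_\<rho> sd_\<rho>hat dims p r] assms(4,5) by (simp add: B_def)
  then have overlap: "(1 - \<epsilon>)\<^sup>2 \<le> (\<Sum>i<d. \<Sum>j<d. B i j * sqrt (p i) * sqrt (r j))"
    by (rule sqrt_ge_absD)
  have M: "unitary_mat d (mat_adjoint U * W)" by (rule unitary_mat_mult[OF unitary_mat_adjoint[OF U] W])
  have "d \<ge> 1" using p(2) by (cases d) auto
  from depolarized_classical_kl_bound[OF this assms(3,4) p r _ _ _ overlap]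
  show ?thesis
    using kl_div_spectral_decomp[OF sd_\<rho> spectral_decomp_depolarize(1)[OF sd_\<rho>hat dims(2)] dims(1)
        spectral_decomp_depolarize(2)[OF sd_\<rho>hat dims(2)]]
      unitary_mat_row_norm[OF M] unitary_mat_col_norm[OF M] by (simp add: B_def)
qed

end
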